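(* Let $\mathbb{T}$ be a time scale with $\sup\mathbb{T}=+\infty$ and bounded graininess, and let the control system $x^\Delta=Ax+Bu$ ($A\in\mathbb{R}^{n\times n}$, $B\in\mathbb{R}^{n\times m}$) on $\mathbb{T}$ be positive. If it is positively stabilizable, then for every $\lambda\in\operatorname{spec}(A)$ with $\lambda\notin\mathcal{S}_\mathbb{T}$ one has $\operatorname{rank}[\lambda I-A,\ B]=n$.
   Context: $x^\Delta$ denotes the delta derivative on the time scale $\mathbb{T}$ (a closed nonempty subset of $\mathbb{R}$); controls are piecewise continuous. The control system $x^\Delta=Ax+Bu$ is positive if for every $t_0\in\mathbb{T}$, every control $u$ with values in $\mathbb{R}^m_+$ and every $x_0\in\mathbb{R}^n_+$, the trajectory with $x(t_0)=x_0$ stays in $\mathbb{R}^n_+$. An autonomous system $x^\Delta=Mx$ is positive if trajectories starting in $\mathbb{R}^n_+$ stay in $\mathbb{R}^n_+$; it is uniformly exponentially stable (resp. positively uniformly exponentially stable) if there exist $K\ge1,\alpha>0$ and an open neighborhood $V$ of $0$ with $\|x(t)\|\le Ke^{-\alpha(t-t_0)}\|x_0\|$ for all $t_0\le t$ in $\mathbb{T}$ and all $x_0\in V$ (resp. all $x_0\in V\cap\mathbb{R}^n_+$). The system is positively stabilizable if there is $K\in\mathbb{R}^{m\times n}$ such that $x^\Delta=(A+BK)x$ is positive and positively uniformly exponentially stable. $\mathcal{S}_\mathbb{T}$ is the set of $\lambda\in\mathbb{C}$ for which the scalar equation $x^\Delta=\lambda x$ is uniformly exponentially stable. *)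

theory Defs
  imports "HOL-Analysis.Analysis"
begin

definition time_scale :: "real set \<Rightarrow> bool" where
  "time_scale T \<longleftrightarrow> closed T \<and> T \<noteq> {}"

definition sigma_ts :: "real set \<Rightarrow> real \<Rightarrow> real" where
  "sigma_ts T t = (if \<exists>s\<in>T. s > t then Inf {s\<in>T. s > t} else t)"

definition graininess :: "real set \<Rightarrow> real \<Rightarrow> real" where
  "graininess T t = sigma_ts T t - t"

definition unbounded_above :: "real set \<Rightarrow> bool" where
  "unbounded_above T \<longleftrightarrow> (\<forall>x. \<exists>t\<in>T. t > x)"

definition bounded_graininess :: "real set \<Rightarrow> bool" where
  "bounded_graininess T \<longleftrightarrow> (\<exists>M. \<forall>t\<in>T. graininess T t \<le> M)"

definition has_delta_derivative ::
  "real set \<Rightarrow> (real \<Rightarrow> 'a::real_normed_vector) \<Rightarrow> 'a \<Rightarrow> real \<Rightarrow> bool" where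
  "has_delta_derivative T f f' t \<longleftrightarrow> t \<in> T \<and>
     (\<forall>\<epsilon>>0. \<exists>\<delta>>0. \<forall>s\<in>T. \<bar>s - t\<bar> < \<delta> \<longrightarrow>
        norm (f (sigma_ts T t) - f s - (sigma_ts T t - s) *\<^sub>R f') \<le> \<epsilon> * \<bar>sigma_ts T t - s\<bar>)"

definition auto_solution ::
  "real set \<Rightarrow> ('a::real_normed_vector \<Rightarrow> 'a) \<Rightarrow> real \<Rightarrow> (real \<Rightarrow> 'a) \<Rightarrow> bool" where
  "auto_solution T F t0 x \<longleftrightarrow>
     (\<forall>t\<in>T. t0 \<le> t \<longrightarrow> has_delta_derivative (T \<inter> {t0..}) x (F (x t)) t)"

definition nonneg_vec :: "real^'n \<Rightarrow> bool" where
  "nonneg_vec v \<longleftrightarrow> (\<forall>i. 0 \<le> v $ i)"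

definition positive_auto :: "real set \<Rightarrow> real^'n^'n \<Rightarrow> bool" where
  "positive_auto T M \<longleftrightarrow>
     (\<forall>t0\<in>T. \<forall>x. auto_solution T (\<lambda>v. M *v v) t0 x \<and> nonneg_vec (x t0) \<longrightarrow>
        (\<forall>t\<in>T. t0 \<le> t \<longrightarrow> nonneg_vec (x t)))"

definition ues_on ::
  "real set \<Rightarrow> ('a::real_normed_vector \<Rightarrow> 'a) \<Rightarrow> 'a set \<Rightarrow> bool" where
  "ues_on T F W \<longleftrightarrow>
     (\<exists>K\<ge>1. \<exists>\<alpha>>0. \<exists>V. open V \<and> 0 \<in> V \<and>
        (\<forall>t0\<in>T. \<forall>x. auto_solution T F t0 x \<and> x t0 \<in> V \<inter> W \<longrightarrow>
           (\<forall>t\<in>T. t0 \<le> t \<longrightarrow> norm (x t) \<le> K * exp (- \<alpha> * (t - t0)) * norm (x t0))))"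

definition ues :: "real set \<Rightarrow> ('a::real_normed_vector \<Rightarrow> 'a) \<Rightarrow> bool" where
  "ues T F \<longleftrightarrow> ues_on T F UNIV"

definition pos_ues :: "real set \<Rightarrow> real^'n^'n \<Rightarrow> bool" where
  "pos_ues T M \<longleftrightarrow> ues_on T (\<lambda>v. M *v v) {v. nonneg_vec v}"

definition stab_set :: "real set \<Rightarrow> complex set" where
  "stab_set T = {c. ues T (\<lambda>z::complex. c * z)}"

definition piecewise_continuous_ts :: "real set \<Rightarrow> (real \<Rightarrow> 'a::real_normed_vector) \<Rightarrow> bool" where
  "piecewise_continuous_ts T u \<longleftrightarrow>
     (\<forall>a b. finite {t\<in>T \<inter> {a..b}. \<not> continuous (at t within T) u}) \<and>
     (\<forall>t\<in>T. (\<exists>l. (u \<longlongrightarrow> l) (at t within (T \<inter> {..<t}))) \<and>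
             (\<exists>l. (u \<longlongrightarrow> l) (at t within (T \<inter> {t<..}))))"

definition ctrl_trajectory ::
  "real set \<Rightarrow> real^'n^'n \<Rightarrow> real^'m^'n \<Rightarrow> (real \<Rightarrow> real^'m) \<Rightarrow> real \<Rightarrow> (real \<Rightarrow> real^'n) \<Rightarrow> bool" where
  "ctrl_trajectory T A B u t0 x \<longleftrightarrow>
     continuous_on (T \<inter> {t0..}) x \<and>
     (\<forall>t\<in>T. t0 \<le> t \<and> (continuous (at t within T) u \<or> sigma_ts T t > t) \<longrightarrow>
        has_delta_derivative (T \<inter> {t0..}) x (A *v x t + B *v u t) t)"

definition positive_ctrl :: "real set \<Rightarrow> real^'n^'n \<Rightarrow> real^'m^'n \<Rightarrow> bool" where
  "positive_ctrl T A B \<longleftrightarrow>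
     (\<forall>t0\<in>T. \<forall>u x. piecewise_continuous_ts T u \<and> (\<forall>t\<in>T. nonneg_vec (u t)) \<and>
        ctrl_trajectory T A B u t0 x \<and> nonneg_vec (x t0) \<longrightarrow>
        (\<forall>t\<in>T. t0 \<le> t \<longrightarrow> nonneg_vec (x t)))"

definition positively_stabilizable :: "real set \<Rightarrow> real^'n^'n \<Rightarrow> real^'m^'n \<Rightarrow> bool" where
  "positively_stabilizable T A B \<longleftrightarrow>
     (\<exists>K :: real^'n^'m. positive_auto T (A + B ** K) \<and> pos_ues T (A + B ** K))"

definition cmat :: "real^'n^'m \<Rightarrow> complex^'n^'m" where
  "cmat A = (\<chi> i j. complex_of_real (A $ i $ j))"

definition spec :: "real^'n^'n \<Rightarrow> complex set" where
  "spec A = {c. \<exists>v::complex^'n. v \<noteq> 0 \<and> cmat A *v v = c *s v}"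

definition pbh_matrix :: "complex \<Rightarrow> real^'n^'n \<Rightarrow> real^'m^'n \<Rightarrow> complex^('n + 'm)^'n" where
  "pbh_matrix c A B = (\<chi> i j. case j of
      Inl k \<Rightarrow> (mat c - cmat A) $ i $ k
    | Inr k \<Rightarrow> cmat B $ i $ k)"

end

theory Submission
  imports Defs
begin

(*
  If the PBH matrix [\<lambda>I - A, B] is rank deficient, a nonzero left null vector w gives
  w(\<lambda>I - A - BK) = 0 for every feedback K, so \<lambda> is an eigenvalue of the stabilizing closed-loop
  matrix M = A + BK.  Positivity upgrades positive uniform exponential stability of x\<^sup>\<Delta> = Mx to an
  exponential bound for all solutions: an arbitrary solution x is dominated componentwise,
  |x| \<le> y, by the solution y starting at the (suitably scaled) vector |x(t\<^sub>0)|.  For an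
  eigenvector v of M, real and imaginary parts of z(t) v turn solutions of z\<^sup>\<Delta> = \<lambda>z into solutions
  of x\<^sup>\<Delta> = Mx, so the bound passes to the scalar equation and \<lambda> \<in> S\<^sub>T.

  The domination step needs solutions from arbitrary initial values.  They are obtained from the
  integral equation y(s) = p + \<integral>\<^sub>t\<^sub>0\<^sup>s F(y(\<lfloor>r\<rfloor>)) dr, where \<lfloor>r\<rfloor> is the largest point of T \<inter> [t\<^sub>0, r]:
  the integrand is constant on each gap (t, \<sigma>(t)) of T, which yields the jump condition of the
  delta derivative, and elsewhere y is an ordinary primitive.
*)

section \<open>Left eigenvectors and the PBH matrix\<close>

lemma matrix_vector_mult_mat: "mat c *v v = c *s (v :: 'a::semiring_1^'n)"
  by (simp add: vec_eq_iff matrix_vector_mult_def mat_def if_distrib [where f = "\<lambda>x. x * _"] cong: if_cong)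

lemma vector_matrix_mult_mat: "v v* mat c = c *s (v :: 'a::comm_semiring_1^'n)"
  by (simp add: vec_eq_iff vector_matrix_mult_def mat_def if_distrib [where f = "\<lambda>x. _ * x"]
      mult.commute cong: if_cong)

lemma row_eq_axis_vector_matrix_mult: "row i P = axis i 1 v* P"
  by (simp add: vec_eq_iff row_def vector_matrix_mult_def axis_def if_distrib [where f = "\<lambda>x. x * _"]
      cong: if_cong)

lemma rank_eq_card_if_left_kernel_trivial:
  fixes P :: "'a::field^'k^'n"
  assumes "\<And>w. w v* P = 0 \<Longrightarrow> w = 0"
  shows "rank P = CARD('n)"
proof -
  let ?f = "(*v) (transpose P)"
  have lin: "Vector_Spaces.linear (*s) (*s) ?f" by (rule matrix_vector_mul_linear_gen)
  have inj: "inj ?f"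
    using assms by (simp add: vec.linear_inj_iff_eq_0[OF lin])
  have rows: "rows P = ?f ` cart_basis"
    by (auto simp: rows_def cart_basis_def row_eq_axis_vector_matrix_mult image_iff)
  have "vec.independent (rows P)"
    unfolding rows using inj
    by (intro vec.linear_independent_injective_image[OF lin] independent_cart_basis)
      (auto intro: inj_on_subset)
  then have "rank P = card (rows P)"
    by (simp add: row_rank_def_gen vec.dim_eq_card_independent)
  also have "\<dots> = card (cart_basis :: ('a^'n) set)"
    unfolding rows by (rule card_image[OF inj_on_subset[OF inj subset_UNIV]])
  finally show ?thesis by (simp add: card_cart_basis)
qed

lemma eigenvector_if_left_eigenvector:
  fixes N :: "'a::field^'n^'n"
  assumes "w \<noteq> 0" "w v* N = c *s w"
  shows "\<exists>v. v \<noteq> 0 \<and> N *v v = c *s v"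
proof (rule ccontr)
  let ?D = "mat c - N"
  assume no_eigenvector: "\<nexists>v. v \<noteq> 0 \<and> N *v v = c *s v"
  have "?D *v v = c *s v - N *v v" for v
    by (simp add: matrix_vector_mult_diff_rdistrib matrix_vector_mult_mat)
  then have "\<forall>v. ?D *v v = 0 \<longrightarrow> v = 0"
    using no_eigenvector by (metis eq_iff_diff_eq_0)
  then obtain E where "E ** ?D = mat 1"
    unfolding matrix_left_invertible_ker[symmetric] by blast
  then have "?D ** E = mat 1" by (rule matrix_left_right_inverse1)
  have "w v* ?D = 0"
    using assms(2) by (simp add: vector_matrix_mult_diff_rdistrib vector_matrix_mult_mat)
  have "w = w v* (?D ** E)" by (simp add: \<open>?D ** E = mat 1\<close>)
  also have "\<dots> = 0" by (simp add: vector_matrix_mul_assoc[symmetric] \<open>w v* ?D = 0\<close>)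
  finally show False using assms(1) by simp
qed

lemma cmat_add: "cmat (A + B) = cmat A + cmat B"
  by (simp add: cmat_def vec_eq_iff)

lemma cmat_mult: "cmat (A ** B) = cmat A ** cmat B"
  by (simp add: cmat_def vec_eq_iff matrix_matrix_mult_def)

lemma vector_matrix_mult_pbh_matrix_eq_0_iff:
  "w v* pbh_matrix c A B = 0 \<longleftrightarrow> w v* (mat c - cmat A) = 0 \<and> w v* cmat B = 0"
proof -
  have "(w v* pbh_matrix c A B) $ Inl k = (w v* (mat c - cmat A)) $ k"
    and "(w v* pbh_matrix c A B) $ Inr l = (w v* cmat B) $ l" for k l
    by (simp_all add: vector_matrix_mult_def pbh_matrix_def)
  then show ?thesis by (metis (no_types, lifting) sum.exhaust vec_eq_iff zero_index)
qed

lemma spec_if_pbh_rank_deficient: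
  fixes A :: "real^'n^'n" and B :: "real^'m^'n" and K :: "real^'n^'m"
  assumes "rank (pbh_matrix c A B) \<noteq> CARD('n)"
  shows "c \<in> spec (A + B ** K)"
proof -
  obtain w where "w \<noteq> 0" and "w v* pbh_matrix c A B = 0"
    using rank_eq_card_if_left_kernel_trivial assms by blast
  then have wA: "w v* cmat A = c *s w" and wB: "w v* cmat B = 0"
    by (auto simp: vector_matrix_mult_pbh_matrix_eq_0_iff vector_matrix_mult_diff_rdistrib
        vector_matrix_mult_mat)
  have "w v* cmat (A + B ** K) = c *s w"
    by (simp add: cmat_add cmat_mult vector_matrix_mult_add_rdistrib vector_matrix_mul_assoc[symmetric]
        wA wB)
  then show ?thesis
    unfolding spec_def using eigenvector_if_left_eigenvector[OF \<open>w \<noteq> 0\<close>] by blast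
qed

section \<open>Delta derivatives and linear combinations of solutions\<close>

lemma has_delta_derivative_bounded_linear:
  assumes L: "bounded_linear L" and f: "has_delta_derivative T f f' t"
  shows "has_delta_derivative T (\<lambda>s. L (f s)) (L f') t"
  unfolding has_delta_derivative_def
proof (intro conjI allI impI)
  show "t \<in> T" using f by (simp add: has_delta_derivative_def)
  interpret L: bounded_linear L by (rule L)
  let ?\<sigma> = "sigma_ts T t"
  obtain C where "C > 0" and C: "\<And>x. norm (L x) \<le> norm x * C"
    using L.pos_bounded by blast
  fix e :: real assume "e > 0"
  then obtain d where "d > 0" and d: "\<forall>s\<in>T. \<bar>s - t\<bar> < d \<longrightarrow>
      norm (f ?\<sigma> - f s - (?\<sigma> - s) *\<^sub>R f') \<le> e / C * \<bar>?\<sigma> - s\<bar>"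
    using f \<open>C > 0\<close> unfolding has_delta_derivative_def by (metis divide_pos_pos)
  show "\<exists>d>0. \<forall>s\<in>T. \<bar>s - t\<bar> < d \<longrightarrow>
      norm (L (f ?\<sigma>) - L (f s) - (?\<sigma> - s) *\<^sub>R L f') \<le> e * \<bar>?\<sigma> - s\<bar>"
  proof (intro exI conjI ballI impI, rule \<open>d > 0\<close>)
    fix s assume "s \<in> T" "\<bar>s - t\<bar> < d"
    have "norm (L (f ?\<sigma>) - L (f s) - (?\<sigma> - s) *\<^sub>R L f') = norm (L (f ?\<sigma> - f s - (?\<sigma> - s) *\<^sub>R f'))"
      by (simp add: L.diff L.scaleR)
    also have "\<dots> \<le> norm (f ?\<sigma> - f s - (?\<sigma> - s) *\<^sub>R f') * C"
      by (rule C)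
    also have "\<dots> \<le> e / C * \<bar>?\<sigma> - s\<bar> * C"
      using d \<open>s \<in> T\<close> \<open>\<bar>s - t\<bar> < d\<close> \<open>C > 0\<close> by (intro mult_right_mono) auto
    finally show "norm (L (f ?\<sigma>) - L (f s) - (?\<sigma> - s) *\<^sub>R L f') \<le> e * \<bar>?\<sigma> - s\<bar>"
      using \<open>C > 0\<close> by simp
  qed
qed

lemma has_delta_derivative_add:
  assumes f: "has_delta_derivative T f f' t" and g: "has_delta_derivative T g g' t"
  shows "has_delta_derivative T (\<lambda>s. f s + g s) (f' + g') t"
  unfolding has_delta_derivative_def
proof (intro conjI allI impI)
  show "t \<in> T" using f by (simp add: has_delta_derivative_def)
  let ?\<sigma> = "sigma_ts T t"
  fix e :: real assume "e > 0"
  obtain d1 where "d1 > 0" and d1: "\<forall>s\<in>T. \<bar>s - t\<bar> < d1 \<longrightarrow>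
      norm (f ?\<sigma> - f s - (?\<sigma> - s) *\<^sub>R f') \<le> e / 2 * \<bar>?\<sigma> - s\<bar>"
    using f \<open>e > 0\<close> unfolding has_delta_derivative_def by (meson half_gt_zero)
  obtain d2 where "d2 > 0" and d2: "\<forall>s\<in>T. \<bar>s - t\<bar> < d2 \<longrightarrow>
      norm (g ?\<sigma> - g s - (?\<sigma> - s) *\<^sub>R g') \<le> e / 2 * \<bar>?\<sigma> - s\<bar>"
    using g \<open>e > 0\<close> unfolding has_delta_derivative_def by (meson half_gt_zero)
  show "\<exists>d>0. \<forall>s\<in>T. \<bar>s - t\<bar> < d \<longrightarrow>
      norm (f ?\<sigma> + g ?\<sigma> - (f s + g s) - (?\<sigma> - s) *\<^sub>R (f' + g')) \<le> e * \<bar>?\<sigma> - s\<bar>"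
  proof (intro exI conjI ballI impI)
    show "min d1 d2 > 0" using \<open>d1 > 0\<close> \<open>d2 > 0\<close> by simp
    fix s assume s: "s \<in> T" "\<bar>s - t\<bar> < min d1 d2"
    have "f ?\<sigma> + g ?\<sigma> - (f s + g s) - (?\<sigma> - s) *\<^sub>R (f' + g')
        = (f ?\<sigma> - f s - (?\<sigma> - s) *\<^sub>R f') + (g ?\<sigma> - g s - (?\<sigma> - s) *\<^sub>R g')"
      by (simp add: algebra_simps)
    also have "norm \<dots> \<le> e / 2 * \<bar>?\<sigma> - s\<bar> + e / 2 * \<bar>?\<sigma> - s\<bar>"
      using d1 d2 s by (intro norm_triangle_le add_mono) auto
    finally show "norm (f ?\<sigma> + g ?\<sigma> - (f s + g s) - (?\<sigma> - s) *\<^sub>R (f' + g')) \<le> e * \<bar>?\<sigma> - s\<bar>"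
      by simp
  qed
qed

lemma auto_solution_bounded_linear_image:
  assumes "bounded_linear L" "\<And>v. L (F v) = G (L v)" "auto_solution T F t0 x"
  shows "auto_solution T G t0 (\<lambda>s. L (x s))"
  using has_delta_derivative_bounded_linear[OF assms(1)] assms(3)
  unfolding auto_solution_def assms(2)[symmetric] by blast

lemma auto_solution_add:
  assumes "linear F" "auto_solution T F t0 x" "auto_solution T F t0 y"
  shows "auto_solution T F t0 (\<lambda>s. x s + y s)"
  using assms has_delta_derivative_add unfolding auto_solution_def linear_add[OF assms(1)] by blast

section \<open>Existence of solutions of linear dynamic equations\<close>

lemma continuous_on_atLeast_if_Icc:
  fixes f :: "real \<Rightarrow> 'a::topological_space"
  assumes "\<And>b. continuous_on {a..b} f"
  shows "continuous_on {a..} f"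
  unfolding continuous_on_eq_continuous_within
proof
  fix x assume "x \<in> {a..}"
  then have "continuous (at x within {a..x+1}) f"
    using assms[of "x+1"] by (simp add: continuous_on_eq_continuous_within)
  moreover have "at x within {a..} = at x within {a..x+1}"
    by (rule at_within_nhd[of _ "{..<x+1}"]) auto
  ultimately show "continuous (at x within {a..}) f" by (simp add: continuous_within)
qed

lemma continuous_on_indefinite_integral_atLeast:
  fixes f :: "real \<Rightarrow> 'a::banach"
  assumes "\<And>b. f integrable_on {a..b}"
  shows "continuous_on {a..} (\<lambda>s. integral {a..s} f)"
  by (intro continuous_on_atLeast_if_Icc indefinite_integral_continuous_1 assms)

lemma integral_power_diff:
  assumes "a \<le> s"
  shows "integral {a..s} (\<lambda>r. (r - a) ^ k) = (s - a) ^ Suc k / Suc k"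
proof -
  have "((\<lambda>r. (r - a) ^ k) has_integral (s - a) ^ Suc k / Suc k - (a - a) ^ Suc k / Suc k) {a..s}"
  proof (rule fundamental_theorem_of_calculus[OF assms])
    fix x assume "x \<in> {a..s}"
    have "((\<lambda>r. (r - a) ^ Suc k / Suc k) has_real_derivative (x - a) ^ k) (at x within {a..s})"
      by (rule derivative_eq_intros refl | simp)+
    then show "((\<lambda>r. (r - a) ^ Suc k / Suc k) has_vector_derivative (x - a) ^ k) (at x within {a..s})"
      by (simp add: has_real_derivative_iff_has_vector_derivative)
  qed
  then show ?thesis by (simp add: integral_unique)
qed

lemma integral_tendsto_if_uniform_limit:
  fixes f :: "nat \<Rightarrow> real \<Rightarrow> 'a::banach"
  assumes lim: "uniform_limit {a..b} f g sequentially"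
    and int: "\<And>n. f n integrable_on {a..b}" "g integrable_on {a..b}"
  shows "(\<lambda>n. integral {a..b} (f n)) \<longlonglongrightarrow> integral {a..b} g"
proof (rule tendstoI)
  fix e :: real assume "e > 0"
  define e' where "e' = e / (\<bar>b - a\<bar> + 1)"
  have "e' > 0" using \<open>e > 0\<close> by (simp add: e'_def add_pos_nonneg)
  show "\<forall>\<^sub>F n in sequentially. dist (integral {a..b} (f n)) (integral {a..b} g) < e"
    using uniform_limitD[OF lim \<open>e' > 0\<close>]
  proof eventually_elim
    case (elim n)
    have "dist (integral {a..b} (f n)) (integral {a..b} g) = norm (integral {a..b} (\<lambda>x. f n x - g x))"
      by (simp add: dist_norm integral_diff int)
    also have "\<dots> \<le> integral {a..b} (\<lambda>x. e')"
      using elim by (intro integral_norm_bound_integral integrable_diff int)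
        (auto simp: dist_norm less_imp_le)
    also have "\<dots> \<le> \<bar>b - a\<bar> * e'" using \<open>e' > 0\<close> by simp
    also have "\<dots> < (\<bar>b - a\<bar> + 1) * e'" using \<open>e' > 0\<close> by simp
    also have "\<dots> = e" by (simp add: e'_def add_pos_nonneg)
    finally show ?case .
  qed
qed

lemma sigma_ts_ge: "t \<le> sigma_ts S t"
  unfolding sigma_ts_def by (auto intro: cInf_greatest)

lemma sigma_ts_le: "u \<in> S \<Longrightarrow> t < u \<Longrightarrow> sigma_ts S t \<le> u"
  unfolding sigma_ts_def by (auto intro!: cInf_lower bdd_belowI[of _ t])

definition ts_floor :: "real set \<Rightarrow> real \<Rightarrow> real \<Rightarrow> real" where
  "ts_floor T t0 r = Sup (T \<inter> {t0..max t0 r})"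

primrec picard_term ::
  "real set \<Rightarrow> real \<Rightarrow> ('a \<Rightarrow> 'a::real_normed_vector) \<Rightarrow> 'a \<Rightarrow> nat \<Rightarrow> real \<Rightarrow> 'a" where
  "picard_term T t0 F p 0 = (\<lambda>s. p)"
| "picard_term T t0 F p (Suc k) =
     (\<lambda>s. integral {t0..s} (\<lambda>r. F (picard_term T t0 F p k (ts_floor T t0 r))))"

definition picard_solution ::
  "real set \<Rightarrow> real \<Rightarrow> ('a \<Rightarrow> 'a::real_normed_vector) \<Rightarrow> 'a \<Rightarrow> real \<Rightarrow> 'a" where
  "picard_solution T t0 F p s = (\<Sum>k. picard_term T t0 F p k s)"

context
  fixes T :: "real set" and t0 :: real
  assumes closed_T: "closed T" and t0_in: "t0 \<in> T"
begin

lemma ts_floor_mem: "ts_floor T t0 r \<in> T \<inter> {t0..max t0 r}"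
  unfolding ts_floor_def
  using t0_in by (intro closed_contains_Sup closed_Int closed_T closed_atLeastAtMost
      bdd_aboveI[of _ "max t0 r"]) auto

lemma ts_floor_greatest:
  assumes "s \<in> T" "t0 \<le> s" "s \<le> max t0 r"
  shows "s \<le> ts_floor T t0 r"
  unfolding ts_floor_def using assms by (intro cSup_upper bdd_aboveI[of _ "max t0 r"]) auto

lemma mono_ts_floor: "mono (ts_floor T t0)"
proof (rule monoI)
  fix r r' :: real assume "r \<le> r'"
  then show "ts_floor T t0 r \<le> ts_floor T t0 r'"
    using ts_floor_mem[of r] t0_in by (intro ts_floor_greatest) auto
qed

lemma ts_floor_eq_if_gap:
  assumes "t \<in> T" "t0 \<le> t" "t \<le> r" "\<And>u. u \<in> T \<Longrightarrow> t < u \<Longrightarrow> r < u"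
  shows "ts_floor T t0 r = t"
  using ts_floor_mem[of r] ts_floor_greatest[of t r] assms by fastforce

lemma integrable_comp_ts_floor:
  fixes f :: "real \<Rightarrow> 'a::euclidean_space"
  assumes f: "continuous_on {t0..} f"
  shows "(\<lambda>r. f (ts_floor T t0 r)) integrable_on {a..b}"
proof -
  have cont: "continuous_on UNIV (\<lambda>x. f (max t0 x))"
    by (rule continuous_on_compose2[OF f]) (auto intro: continuous_intros)
  have eq: "(\<lambda>r. f (ts_floor T t0 r)) = (\<lambda>x. f (max t0 x)) \<circ> ts_floor T t0"
    using ts_floor_mem by (auto simp: max_absorb2)
  have "(\<lambda>r. f (ts_floor T t0 r)) \<in> borel_measurable borel"
    unfolding eq by (rule measurable_comp[OF borel_measurable_mono[OF mono_ts_floor]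
        borel_measurable_continuous_onI[OF cont]])
  then have meas: "(\<lambda>r. f (ts_floor T t0 r)) \<in> borel_measurable (lebesgue_on {a..b})"
    using measurable_comp[OF id_borel_measurable_lebesgue_on] by (simp add: o_def)
  have "bounded (f ` {t0..max t0 b})"
    by (intro compact_imp_bounded compact_continuous_image continuous_on_subset[OF f]) auto
  then obtain B where B: "\<And>y. y \<in> f ` {t0..max t0 b} \<Longrightarrow> norm y \<le> B"
    by (auto simp: bounded_iff)
  have "norm (f (ts_floor T t0 r)) \<le> B" if "r \<in> {a..b}" for r
    using ts_floor_mem[of r] that by (intro B) auto
  then show ?thesis
    by (intro measurable_bounded_by_integrable_imp_integrable[OF meas]) auto
qed

context
  fixes f y :: "real \<Rightarrow> 'a::euclidean_space"
  assumes f: "continuous_on {t0..} f"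
    and y: "\<And>a b. t0 \<le> a \<Longrightarrow> a \<le> b \<Longrightarrow> y b - y a = integral {a..b} (\<lambda>r. f (ts_floor T t0 r))"
begin

lemma norm_increment_le:
  assumes ab: "t0 \<le> a" "a \<le> b" and close: "\<And>r. r \<in> {a..b} \<Longrightarrow> norm (f (ts_floor T t0 r) - c) \<le> e"
  shows "norm (y b - y a - (b - a) *\<^sub>R c) \<le> (b - a) * e"
proof -
  have int: "(\<lambda>r. f (ts_floor T t0 r)) integrable_on {a..b}"
    by (rule integrable_comp_ts_floor[OF f])
  have "y b - y a - (b - a) *\<^sub>R c = integral {a..b} (\<lambda>r. f (ts_floor T t0 r) - c)"
    using ab by (simp add: y integral_diff[OF int integrable_const_ivl])
  also have "norm \<dots> \<le> integral {a..b} (\<lambda>r. e)"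
    by (intro integral_norm_bound_integral integrable_diff int integrable_const_ivl close)
  finally show ?thesis using ab by simp
qed

lemma increment_across_gap:
  assumes t: "t \<in> T" "t0 \<le> t" "t \<le> u" and gap: "\<And>v. v \<in> T \<Longrightarrow> t < v \<Longrightarrow> u \<le> v"
  shows "y u - y t = (u - t) *\<^sub>R f t"
proof -
  have "y u - y t = integral {t..u} (\<lambda>r. f (ts_floor T t0 r))" using t by (simp add: y)
  also have "\<dots> = integral {t..u} (\<lambda>r. f t)"
  proof (rule integral_spike[of "{u}"])
    fix r assume "r \<in> {t..u} - {u}"
    then have "ts_floor T t0 r = t"
      using gap by (intro ts_floor_eq_if_gap t) force+
    then show "f t = f (ts_floor T t0 r)" by simp
  qed simp
  finally show ?thesis using t by simp
qed

lemma norm_increment_le_between_points: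
  assumes "s \<in> T" "t \<in> T" "t0 \<le> s" "t0 \<le> t"
    and close: "\<And>u. u \<in> {min s t..max s t} \<Longrightarrow> norm (f u - f t) \<le> e"
  shows "norm (y t - y s - (t - s) *\<^sub>R f t) \<le> e * \<bar>t - s\<bar>"
proof -
  define a b where "a = min s t" and "b = max s t"
  have "a \<in> T" "t0 \<le> a" using assms by (auto simp: a_def min_def)
  have "norm (y b - y a - (b - a) *\<^sub>R f t) \<le> (b - a) * e"
  proof (rule norm_increment_le)
    show "t0 \<le> a" "a \<le> b" using \<open>t0 \<le> a\<close> by (auto simp: a_def b_def)
    fix r assume "r \<in> {a..b}"
    then have "ts_floor T t0 r \<in> {a..b}"
      using ts_floor_greatest[OF \<open>a \<in> T\<close> \<open>t0 \<le> a\<close>, of r] ts_floor_mem[of r] \<open>t0 \<le> a\<close> by auto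
    then show "norm (f (ts_floor T t0 r) - f t) \<le> e" using close unfolding a_def b_def by blast
  qed
  moreover have "y s - y t - (s - t) *\<^sub>R f t = - (y t - y s - (t - s) *\<^sub>R f t)"
    by (simp add: algebra_simps)
  then have "norm (y b - y a - (b - a) *\<^sub>R f t) = norm (y t - y s - (t - s) *\<^sub>R f t)"
    by (cases "s \<le> t") (simp_all only: a_def b_def min_def max_def if_True if_False norm_minus_cancel)
  moreover have "b - a = \<bar>t - s\<bar>" unfolding a_def b_def by linarith
  ultimately show ?thesis by (simp only: mult.commute)
qed

lemma has_delta_derivative_if_integral_eq:
  assumes t: "t \<in> T" "t0 \<le> t"
  shows "has_delta_derivative (T \<inter> {t0..}) y (f t) t"
  unfolding has_delta_derivative_def
proof (intro conjI allI impI)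
  show "t \<in> T \<inter> {t0..}" using t by simp
  fix e :: real assume "e > 0"
  obtain d where "d > 0" and d: "\<And>u. u \<in> {t0..} \<Longrightarrow> dist u t < d \<Longrightarrow> dist (f u) (f t) < e"
    using f t \<open>e > 0\<close> unfolding continuous_on_iff by (metis atLeast_iff)
  define \<sigma> where "\<sigma> = sigma_ts (T \<inter> {t0..}) t"
  have \<sigma>: "t \<le> \<sigma>" "\<And>v. v \<in> T \<Longrightarrow> t < v \<Longrightarrow> \<sigma> \<le> v"
    unfolding \<sigma>_def using t by (auto intro: sigma_ts_ge sigma_ts_le)
  define d' where "d' = (if \<sigma> = t then d else min d (\<sigma> - t))"
  show "\<exists>d>0. \<forall>s\<in>T \<inter> {t0..}. \<bar>s - t\<bar> < d \<longrightarrow>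
          norm (y \<sigma> - y s - (\<sigma> - s) *\<^sub>R f t) \<le> e * \<bar>\<sigma> - s\<bar>"
  proof (intro exI conjI ballI impI)
    show "d' > 0" using \<open>d > 0\<close> \<sigma>(1) by (simp add: d'_def)
    fix s assume s: "s \<in> T \<inter> {t0..}" "\<bar>s - t\<bar> < d'"
    have incr: "norm (y t - y s - (t - s) *\<^sub>R f t) \<le> e * \<bar>t - s\<bar>"
    proof (rule norm_increment_le_between_points)
      show "s \<in> T" "t0 \<le> s" using s by auto
      fix u assume u: "u \<in> {min s t..max s t}"
      have "\<bar>s - t\<bar> < d" using s(2) by (simp add: d'_def split: if_splits)
      then have "dist u t < d" using u by (auto simp: dist_real_def)
      moreover have "t0 \<le> u" using u s t by auto
      ultimately show "norm (f u - f t) \<le> e"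
        using d[of u] by (simp add: dist_norm)
    qed (use t in auto)
    have "y \<sigma> - y t = (\<sigma> - t) *\<^sub>R f t"
      using increment_across_gap[OF t \<sigma>] by simp
    then have eq: "y \<sigma> - y s - (\<sigma> - s) *\<^sub>R f t = y t - y s - (t - s) *\<^sub>R f t"
      by (simp add: algebra_simps)
    have "\<bar>t - s\<bar> \<le> \<bar>\<sigma> - s\<bar>"
    proof (cases "\<sigma> = t")
      case False
      have "s \<le> t"
      proof (rule ccontr)
        assume "\<not> s \<le> t"
        then have "\<sigma> \<le> s" using s \<sigma>(2)[of s] by simp
        moreover have "\<bar>s - t\<bar> < \<sigma> - t" using s(2) False by (simp add: d'_def)
        ultimately show False by linarith
      qed
      then show ?thesis using \<sigma>(1) by simp
    qed simp
    then show "norm (y \<sigma> - y s - (\<sigma> - s) *\<^sub>R f t) \<le> e * \<bar>\<sigma> - s\<bar>"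
      unfolding eq using incr \<open>e > 0\<close> by (meson mult_left_mono less_imp_le order_trans)
  qed
qed

end

context
  fixes F :: "'a::euclidean_space \<Rightarrow> 'a"
  assumes F: "bounded_linear F"
begin

lemma integrable_bounded_linear_comp_ts_floor:
  assumes "continuous_on {t0..} y"
  shows "(\<lambda>r. F (y (ts_floor T t0 r))) integrable_on {a..b}"
  using assms bounded_linear.continuous_on[OF F] by (intro integrable_comp_ts_floor) blast

lemma continuous_on_picard_term: "continuous_on {t0..} (picard_term T t0 F p k)"
  by (induction k)
    (auto intro: continuous_on_indefinite_integral_atLeast integrable_bounded_linear_comp_ts_floor)

lemma norm_picard_term_le:
  "t0 \<le> s \<Longrightarrow> norm (picard_term T t0 F p k s) \<le> (onorm F * (s - t0)) ^ k / fact k * norm p"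
proof (induction k arbitrary: s)
  case (Suc k)
  let ?m = "onorm F" and ?c = "onorm F ^ Suc k * norm p / fact k"
  have m: "0 \<le> ?m" by (rule onorm_pos_le[OF F])
  have "norm (picard_term T t0 F p (Suc k) s) \<le> integral {t0..s} (\<lambda>r. ?c * (r - t0) ^ k)"
    unfolding picard_term.simps
  proof (rule integral_norm_bound_integral)
    show "(\<lambda>r. F (picard_term T t0 F p k (ts_floor T t0 r))) integrable_on {t0..s}"
      by (rule integrable_bounded_linear_comp_ts_floor[OF continuous_on_picard_term])
    show "(\<lambda>r. ?c * (r - t0) ^ k) integrable_on {t0..s}"
      by (intro integrable_continuous_interval continuous_intros)
    fix r assume r: "r \<in> {t0..s}"
    let ?g = "ts_floor T t0 r"
    have g: "t0 \<le> ?g" "?g \<le> r" using ts_floor_mem[of r] r by auto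
    have "norm (F (picard_term T t0 F p k ?g)) \<le> ?m * norm (picard_term T t0 F p k ?g)"
      by (rule onorm[OF F])
    also have "\<dots> \<le> ?m * ((?m * (?g - t0)) ^ k / fact k * norm p)"
      using Suc.IH[OF g(1)] m by (rule mult_left_mono)
    also have "\<dots> \<le> ?m * ((?m * (r - t0)) ^ k / fact k * norm p)"
      using g m by (intro mult_left_mono mult_right_mono divide_right_mono power_mono) auto
    also have "\<dots> = ?c * (r - t0) ^ k" by (simp add: power_mult_distrib)
    finally show "norm (F (picard_term T t0 F p k ?g)) \<le> ?c * (r - t0) ^ k" .
  qed
  also have "\<dots> = ?c * ((s - t0) ^ Suc k / Suc k)"
    using integral_power_diff[OF Suc.prems] by simp
  also have "\<dots> = (?m * (s - t0)) ^ Suc k / fact (Suc k) * norm p"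
    by (simp only: power_mult_distrib fact_Suc of_nat_mult) (simp add: field_simps)
  finally show ?case .
qed simp

lemma uniform_limit_picard_solution:
  assumes "t0 \<le> b"
  shows "uniform_limit {t0..b} (\<lambda>N s. \<Sum>k<N. picard_term T t0 F p k s)
           (picard_solution T t0 F p) sequentially"
  unfolding picard_solution_def[abs_def]
proof (rule Weierstrass_m_test)
  let ?m = "onorm F"
  fix k s assume s: "s \<in> {t0..b}"
  have "norm (picard_term T t0 F p k s) \<le> (?m * (s - t0)) ^ k / fact k * norm p"
    using norm_picard_term_le s by auto
  also have "\<dots> \<le> (?m * (b - t0)) ^ k / fact k * norm p"
    using s onorm_pos_le[OF F]
    by (intro mult_right_mono divide_right_mono power_mono mult_left_mono) auto
  finally show "norm (picard_term T t0 F p k s) \<le> (?m * (b - t0)) ^ k / fact k * norm p" .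
next
  have "summable (\<lambda>k. norm p * (inverse (fact k) * (onorm F * (b - t0)) ^ k))"
    by (intro summable_mult summable_exp)
  then show "summable (\<lambda>k. (onorm F * (b - t0)) ^ k / fact k * norm p)"
    by (simp add: field_simps)
qed

lemma continuous_on_picard_solution: "continuous_on {t0..} (picard_solution T t0 F p)"
proof (rule continuous_on_atLeast_if_Icc)
  fix b
  show "continuous_on {t0..b} (picard_solution T t0 F p)"
  proof (cases "t0 \<le> b")
    case True
    show ?thesis
      by (rule uniform_limit_theorem[OF _ uniform_limit_picard_solution[OF True]])
        (auto intro!: always_eventually continuous_on_sum
          intro: continuous_on_subset[OF continuous_on_picard_term])
  qed simp
qed

lemma picard_solution_integral_eq:
  assumes s: "t0 \<le> s"
  shows "picard_solution T t0 F p s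
           = p + integral {t0..s} (\<lambda>r. F (picard_solution T t0 F p (ts_floor T t0 r)))"
proof -
  define P where "P = (\<lambda>N s. \<Sum>k<N. picard_term T t0 F p k s)"
  let ?y = "picard_solution T t0 F p"
  have lim: "uniform_limit {t0..s} P ?y sequentially"
    unfolding P_def by (rule uniform_limit_picard_solution[OF s])
  have cont_P: "continuous_on {t0..} (P N)" for N
    unfolding P_def by (intro continuous_on_sum continuous_on_picard_term)
  have P_Suc: "P (Suc N) s = p + integral {t0..s} (\<lambda>r. F (P N (ts_floor T t0 r)))" for N
  proof -
    have "P (Suc N) s = p + (\<Sum>k<N. picard_term T t0 F p (Suc k) s)"
      unfolding P_def by (simp only: sum.lessThan_Suc_shift picard_term.simps(1))
    also have "(\<Sum>k<N. picard_term T t0 F p (Suc k) s)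
        = integral {t0..s} (\<lambda>r. \<Sum>k<N. F (picard_term T t0 F p k (ts_floor T t0 r)))"
      by (simp add: integral_sum integrable_bounded_linear_comp_ts_floor continuous_on_picard_term)
    finally show ?thesis
      by (simp add: P_def linear_sum[OF bounded_linear.linear[OF F]])
  qed
  have "(\<lambda>N. P (Suc N) s) \<longlonglongrightarrow> ?y s"
    using LIMSEQ_Suc[OF tendsto_uniform_limitI[OF lim]] s by simp
  moreover have "(\<lambda>N. P (Suc N) s) \<longlonglongrightarrow> p + integral {t0..s} (\<lambda>r. F (?y (ts_floor T t0 r)))"
  proof -
    have "uniform_limit {t0..s} (\<lambda>N r. F (P N (ts_floor T t0 r))) (\<lambda>r. F (?y (ts_floor T t0 r))) sequentially"
      using ts_floor_mem
      by (intro bounded_linear.uniform_limit[OF F] uniform_limit_compose'[OF lim])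
        (fastforce simp: max_def)
    then show ?thesis
      unfolding P_Suc
      by (intro tendsto_add tendsto_const integral_tendsto_if_uniform_limit
          integrable_bounded_linear_comp_ts_floor cont_P continuous_on_picard_solution)
  qed
  ultimately show ?thesis by (rule LIMSEQ_unique)
qed

lemma auto_solution_picard_solution: "auto_solution T F t0 (picard_solution T t0 F p)"
  unfolding auto_solution_def
proof (intro ballI impI)
  let ?y = "picard_solution T t0 F p"
  have cont: "continuous_on {t0..} (\<lambda>s. F (?y s))"
    using continuous_on_picard_solution bounded_linear.continuous_on[OF F] by blast
  have "?y b - ?y a = integral {a..b} (\<lambda>r. F (?y (ts_floor T t0 r)))" if "t0 \<le> a" "a \<le> b" for a b
    using that picard_solution_integral_eq[of a] picard_solution_integral_eq[of b]
      Henstock_Kurzweil_Integration.integral_combine[OF that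
        integrable_bounded_linear_comp_ts_floor[OF continuous_on_picard_solution]]
    by (simp add: algebra_simps)
  then show "has_delta_derivative (T \<inter> {t0..}) ?y (F (?y t)) t" if "t \<in> T" "t0 \<le> t" for t
    using has_delta_derivative_if_integral_eq[OF cont _ that] by blast
qed

lemma picard_solution_initial: "picard_solution T t0 F p t0 = p"
  using picard_solution_integral_eq[of t0] by simp

end

end

lemma auto_solution_exists:
  fixes F :: "'a::euclidean_space \<Rightarrow> 'a"
  assumes "closed T" "t0 \<in> T" "bounded_linear F"
  shows "\<exists>y. auto_solution T F t0 y \<and> y t0 = p"
  using auto_solution_picard_solution[OF assms] picard_solution_initial[OF assms] by blast

section \<open>Exponential bounds and the stability set\<close>

definition uniform_exp_bound ::
  "real set \<Rightarrow> ('a::real_normed_vector \<Rightarrow> 'a) \<Rightarrow> real \<Rightarrow> real \<Rightarrow> bool" where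
  "uniform_exp_bound T F K \<alpha> \<longleftrightarrow>
     (\<forall>t0\<in>T. \<forall>x. auto_solution T F t0 x \<longrightarrow>
        (\<forall>t\<in>T. t0 \<le> t \<longrightarrow> norm (x t) \<le> K * exp (- \<alpha> * (t - t0)) * norm (x t0)))"

lemma norm_le_if_nonneg_vec_add_diff:
  fixes x y :: "real^'n"
  assumes "nonneg_vec (y + x)" "nonneg_vec (y - x)"
  shows "norm x \<le> norm y"
proof (rule norm_le_componentwise_cart)
  fix i
  have "0 \<le> y $ i + x $ i" "0 \<le> y $ i - x $ i"
    using assms by (simp_all add: nonneg_vec_def)
  then show "norm (x $ i) \<le> norm (y $ i)" by simp
qed

lemma positive_autoD:
  fixes M :: "real^'n^'n"
  shows "positive_auto T M \<Longrightarrow> t0 \<in> T \<Longrightarrow> auto_solution T (\<lambda>v. M *v v) t0 x \<Longrightarrow>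
    nonneg_vec (x t0) \<Longrightarrow> t \<in> T \<Longrightarrow> t0 \<le> t \<Longrightarrow> nonneg_vec (x t)"
  unfolding positive_auto_def by blast

lemma auto_solution_matrix_scaleR:
  fixes M :: "real^'n^'n"
  assumes "auto_solution T (\<lambda>v. M *v v) t0 x"
  shows "auto_solution T (\<lambda>v. M *v v) t0 (\<lambda>s. c *\<^sub>R x s)"
  by (rule auto_solution_bounded_linear_image[OF bounded_linear_scaleR_right _ assms])
    (simp add: matrix_vector_mult_scaleR)

text \<open>A positive linear system preserves the domination \<open>\<bar>x\<bar> \<le> y\<close>, since \<open>y + x\<close> and \<open>y - x\<close>
  are again solutions.\<close>

lemma norm_le_if_dominated_initially:
  fixes M :: "real^'n^'n"
  assumes pos: "positive_auto T M" and "t0 \<in> T"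
    and x: "auto_solution T (\<lambda>v. M *v v) t0 x" and y: "auto_solution T (\<lambda>v. M *v v) t0 y"
    and "nonneg_vec (y t0 + x t0)" "nonneg_vec (y t0 - x t0)"
    and t: "t \<in> T" "t0 \<le> t"
  shows "norm (x t) \<le> norm (y t)"
proof (rule norm_le_if_nonneg_vec_add_diff)
  have sol: "auto_solution T (\<lambda>v. M *v v) t0 (\<lambda>s. y s + c *\<^sub>R x s)" for c
    by (rule auto_solution_add[OF matrix_vector_mul_linear y auto_solution_matrix_scaleR[OF x]])
  show "nonneg_vec (y t + x t)"
    using positive_autoD[OF pos \<open>t0 \<in> T\<close> sol[of 1] _ t] assms(5) by simp
  show "nonneg_vec (y t - x t)"
    using positive_autoD[OF pos \<open>t0 \<in> T\<close> sol[of "-1"] _ t] assms(6) by simp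
qed

lemma dominating_solution_exists:
  fixes M :: "real^'n^'n"
  assumes "closed T" and pos: "positive_auto T M" and "t0 \<in> T"
    and x: "auto_solution T (\<lambda>v. M *v v) t0 x"
  obtains y where "auto_solution T (\<lambda>v. M *v v) t0 y" "y t0 = (\<chi> i. \<bar>x t0 $ i\<bar>)"
    "\<And>t. t \<in> T \<Longrightarrow> t0 \<le> t \<Longrightarrow> norm (x t) \<le> norm (y t)"
proof -
  obtain y where y: "auto_solution T (\<lambda>v. M *v v) t0 y" and y0: "y t0 = (\<chi> i. \<bar>x t0 $ i\<bar>)"
    using auto_solution_exists[OF \<open>closed T\<close> \<open>t0 \<in> T\<close> matrix_vector_mul_bounded_linear] by blast
  have "norm (x t) \<le> norm (y t)" if "t \<in> T" "t0 \<le> t" for t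
    by (rule norm_le_if_dominated_initially[OF pos \<open>t0 \<in> T\<close> x y _ _ that])
      (auto simp: nonneg_vec_def y0)
  with y y0 show ?thesis using that by blast
qed

lemma uniform_exp_bound_if_positive_pos_ues:
  fixes M :: "real^'n^'n"
  assumes "closed T" and pos: "positive_auto T M" and "pos_ues T M"
  shows "\<exists>K\<ge>1. \<exists>\<alpha>>0. uniform_exp_bound T (\<lambda>v. M *v v) K \<alpha>"
proof -
  obtain K \<alpha> V where "K \<ge> 1" "\<alpha> > 0" "open V" "0 \<in> V"
    and bound: "\<And>t0 y t. t0 \<in> T \<Longrightarrow> auto_solution T (\<lambda>v. M *v v) t0 y \<Longrightarrow> y t0 \<in> V \<Longrightarrow>
        nonneg_vec (y t0) \<Longrightarrow> t \<in> T \<Longrightarrow> t0 \<le> t \<Longrightarrow> norm (y t) \<le> K * exp (- \<alpha> * (t - t0)) * norm (y t0)"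
    using \<open>pos_ues T M\<close> unfolding pos_ues_def ues_on_def by blast
  obtain r where "r > 0" and r: "ball 0 r \<subseteq> V" using \<open>open V\<close> \<open>0 \<in> V\<close> open_contains_ball by blast
  have "uniform_exp_bound T (\<lambda>v. M *v v) K \<alpha>"
    unfolding uniform_exp_bound_def
  proof (intro ballI allI impI)
    fix t0 x t assume "t0 \<in> T" and x: "auto_solution T (\<lambda>v. M *v v) t0 x" and t: "t \<in> T" "t0 \<le> t"
    define c where "c = r / (norm (x t0) + 1)"
    have "c > 0" using \<open>r > 0\<close> by (simp add: c_def add_nonneg_pos)
    have "c * norm (x t0) = r * norm (x t0) / (norm (x t0) + 1)" by (simp add: c_def)
    also have "\<dots> < r" using \<open>r > 0\<close> by (simp add: pos_divide_less_eq add_nonneg_pos)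
    finally have "c * norm (x t0) < r" .
    obtain y where y: "auto_solution T (\<lambda>v. M *v v) t0 y" and y0: "y t0 = (\<chi> i. \<bar>(c *\<^sub>R x t0) $ i\<bar>)"
      and dom: "\<And>t. t \<in> T \<Longrightarrow> t0 \<le> t \<Longrightarrow> norm (c *\<^sub>R x t) \<le> norm (y t)"
      using dominating_solution_exists[OF \<open>closed T\<close> pos \<open>t0 \<in> T\<close> auto_solution_matrix_scaleR[OF x, of c]] by blast
    have "norm (y t0) \<le> norm (c *\<^sub>R x t0)"
      unfolding y0 by (rule norm_le_componentwise_cart) simp
    then have "norm (y t0) \<le> c * norm (x t0)" using \<open>c > 0\<close> by simp
    then have "y t0 \<in> V" using r \<open>c * norm (x t0) < r\<close> by (auto simp: dist_norm)
    have "c * norm (x t) \<le> norm (y t)" using dom[OF t] \<open>c > 0\<close> by simp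
    also have "\<dots> \<le> K * exp (- \<alpha> * (t - t0)) * norm (y t0)"
      using bound[OF \<open>t0 \<in> T\<close> y \<open>y t0 \<in> V\<close> _ t] by (simp add: y0 nonneg_vec_def)
    also have "\<dots> \<le> c * (K * exp (- \<alpha> * (t - t0)) * norm (x t0))"
      using \<open>norm (y t0) \<le> c * norm (x t0)\<close> \<open>K \<ge> 1\<close> by (simp add: mult_left_mono)
    finally show "norm (x t) \<le> K * exp (- \<alpha> * (t - t0)) * norm (x t0)"
      using \<open>c > 0\<close> by simp
  qed
  then show ?thesis using \<open>K \<ge> 1\<close> \<open>\<alpha> > 0\<close> by blast
qed

lemma uniform_exp_boundD:
  "uniform_exp_bound T F K \<alpha> \<Longrightarrow> t0 \<in> T \<Longrightarrow> auto_solution T F t0 x \<Longrightarrow> t \<in> T \<Longrightarrow> t0 \<le> t \<Longrightarrow>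
    norm (x t) \<le> K * exp (- \<alpha> * (t - t0)) * norm (x t0)"
  unfolding uniform_exp_bound_def by blast

definition Re_vec :: "complex^'n \<Rightarrow> real^'n" where
  "Re_vec u = (\<chi> j. Re (u $ j))"

lemma bounded_linear_Re_vec: "bounded_linear Re_vec"
  unfolding linear_conv_bounded_linear[symmetric]
  by (rule linearI) (simp_all add: Re_vec_def vec_eq_iff)

lemma Re_vec_cmat_mult: "Re_vec (cmat M *v u) = M *v Re_vec u"
  by (simp add: Re_vec_def cmat_def vec_eq_iff matrix_vector_mult_def Re_sum)

lemma norm_Re_vec_le: "norm (Re_vec u) \<le> (\<Sum>j\<in>UNIV. cmod (u $ j))"
proof -
  have "norm (Re_vec u) \<le> (\<Sum>j\<in>UNIV. \<bar>Re_vec u $ j\<bar>)" by (rule norm_le_l1_cart)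
  also have "\<dots> \<le> (\<Sum>j\<in>UNIV. cmod (u $ j))"
    by (intro sum_mono) (simp add: Re_vec_def abs_Re_le_cmod)
  finally show ?thesis .
qed

lemma cmod_le_norm_Re_vec: "cmod (u $ i) \<le> norm (Re_vec u) + norm (Re_vec (- \<i> *s u))"
proof -
  have "cmod (u $ i) \<le> \<bar>Re (u $ i)\<bar> + \<bar>Im (u $ i)\<bar>" by (rule cmod_le)
  also have "\<dots> \<le> norm (Re_vec u) + norm (Re_vec (- \<i> *s u))"
    using component_le_norm_cart[of "Re_vec u" i] component_le_norm_cart[of "Re_vec (- \<i> *s u)" i]
    by (simp add: Re_vec_def)
  finally show ?thesis .
qed

lemma auto_solution_Re_vec_eigenvector:
  fixes M :: "real^'n^'n"
  assumes ev: "cmat M *v v = c *s v" and z: "auto_solution T (\<lambda>w. c * w) t0 z"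
  shows "auto_solution T (\<lambda>x. M *v x) t0 (\<lambda>s. Re_vec ((d * z s) *s v))"
proof (rule auto_solution_bounded_linear_image[OF _ _ z])
  have "bounded_linear (\<lambda>w. (d * w) *s v)"
    unfolding linear_conv_bounded_linear[symmetric]
    by (rule linearI) (simp_all add: vec_eq_iff algebra_simps)
  then show "bounded_linear (\<lambda>w. Re_vec ((d * w) *s v))"
    using bounded_linear_compose[OF bounded_linear_Re_vec] by blast
  fix w
  have "(d * (c * w)) *s v = cmat M *v ((d * w) *s v)"
    by (simp add: vector_scalar_commute ev vector_smult_assoc mult_ac)
  then show "Re_vec ((d * (c * w)) *s v) = M *v Re_vec ((d * w) *s v)"
    by (simp add: Re_vec_cmat_mult)
qed

lemma stab_set_if_uniform_exp_bound:
  fixes M :: "real^'n^'n"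
  assumes "K \<ge> 1" "\<alpha> > 0" and bound: "uniform_exp_bound T (\<lambda>x. M *v x) K \<alpha>" and "c \<in> spec M"
  shows "c \<in> stab_set T"
proof -
  obtain v where "v \<noteq> 0" and ev: "cmat M *v v = c *s v" using \<open>c \<in> spec M\<close> by (auto simp: spec_def)
  then obtain i where "v $ i \<noteq> 0" by (auto simp: vec_eq_iff)
  define S where "S = (\<Sum>j\<in>UNIV. cmod (v $ j))"
  define K' where "K' = max 1 (2 * K * S / cmod (v $ i))"
  have "norm (z t) \<le> K' * exp (- \<alpha> * (t - t0)) * norm (z t0)"
    if "t0 \<in> T" and z: "auto_solution T (\<lambda>w. c * w) t0 z" and t: "t \<in> T" "t0 \<le> t" for t0 z t
  proof -
    let ?E = "exp (- \<alpha> * (t - t0))"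
    have "norm (Re_vec ((d * z t) *s v)) \<le> K * ?E * (cmod (z t0) * S)" if "cmod d = 1" for d
    proof -
      have "norm (Re_vec ((d * z t) *s v)) \<le> K * ?E * norm (Re_vec ((d * z t0) *s v))"
        by (rule uniform_exp_boundD[OF bound \<open>t0 \<in> T\<close> auto_solution_Re_vec_eigenvector[OF ev z] t])
      also have "norm (Re_vec ((d * z t0) *s v)) \<le> cmod (z t0) * S"
        using norm_Re_vec_le[of "(d * z t0) *s v"]
        by (simp add: S_def norm_mult that sum_distrib_left)
      finally show ?thesis using \<open>K \<ge> 1\<close> by (simp add: mult_left_mono)
    qed
    from this[of 1] this[of "- \<i>"] have "cmod (z t) * cmod (v $ i) \<le> 2 * K * S * ?E * cmod (z t0)"
      using cmod_le_norm_Re_vec[of "z t *s v" i] by (simp add: norm_mult vector_smult_assoc algebra_simps)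
    then have "cmod (z t) \<le> 2 * K * S / cmod (v $ i) * ?E * cmod (z t0)"
      using \<open>v $ i \<noteq> 0\<close> by (simp add: field_simps)
    also have "\<dots> \<le> K' * ?E * cmod (z t0)"
      by (intro mult_right_mono) (auto simp: K'_def)
    finally show ?thesis by simp
  qed
  then show ?thesis
    unfolding stab_set_def ues_def ues_on_def using \<open>\<alpha> > 0\<close>
    by (intro CollectI exI[of _ K'] conjI exI[of _ \<alpha>] exI[of _ UNIV]) (auto simp: K'_def)
qed

theorem mainTheorem5:
  fixes T :: "real set" and A :: "real^'n^'n" and B :: "real^'m^'n"
  assumes "time_scale T"
    and "unbounded_above T"
    and "bounded_graininess T"
    and "positive_ctrl T A B"
    and "positively_stabilizable T A B"
  shows "\<forall>c\<in>spec A. c \<notin> stab_set T \<longrightarrow> rank (pbh_matrix c A B) = CARD('n)"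
proof (intro ballI impI)
  fix c assume "c \<notin> stab_set T"
  obtain K :: "real^'n^'m" where pos: "positive_auto T (A + B ** K)" and ues: "pos_ues T (A + B ** K)"
    using assms(5) unfolding positively_stabilizable_def by blast
  have "closed T" using assms(1) by (simp add: time_scale_def)
  obtain K' \<alpha> where "K' \<ge> 1" "\<alpha> > 0" and bound: "uniform_exp_bound T (\<lambda>v. (A + B ** K) *v v) K' \<alpha>"
    using uniform_exp_bound_if_positive_pos_ues[OF \<open>closed T\<close> pos ues] by blast
  have "c \<notin> spec (A + B ** K)"
    using stab_set_if_uniform_exp_bound[OF \<open>K' \<ge> 1\<close> \<open>\<alpha> > 0\<close> bound] \<open>c \<notin> stab_set T\<close> by blast
  then show "rank (pbh_matrix c A B) = CARD('n)"
    using spec_if_pbh_rank_deficient[of c A B K] by blast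
qed

end
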